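(* Let $f(t)=at^2+bt+c\in\mathbb{Z}[t]$ be irreducible over $\mathbb{Q}$ with $a\ne 0$, and let $\alpha$ be a root of $f$ in its splitting field. Then for any $k\in\mathbb{N}$ there exist integers $m,n,A,B$ with $A\ne 0$ and $\gcd(A,B)=1$ such that $(ma\alpha+n)^k=A\alpha+B$. *)

theory Defs
  imports "HOL-Computational_Algebra.Computational_Algebra"
begin

end

theory Submission
  imports Defs
begin

text \<open>
  Put \<open>\<beta> = a\<alpha>\<close>, a root of \<open>t\<^sup>2 + bt + ac\<close>, and expand \<open>(m\<beta> + 1)\<^sup>k = P\<^sub>k\<beta> + Q\<^sub>k\<close>,
  so that \<open>(ma\<alpha> + 1)\<^sup>k = (aP\<^sub>k)\<alpha> + Q\<^sub>k\<close>. Choose \<open>m\<close> divisible by \<open>a\<close> and by the discriminant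
  \<open>D = b\<^sup>2 - 4ac\<close>, and so large that the norm \<open>N = 1 - bm + acm\<^sup>2\<close> of \<open>m\<beta> + 1\<close> is not a unit.
  A common prime factor \<open>p\<close> of \<open>aP\<^sub>k\<close> and \<open>Q\<^sub>k\<close> cannot divide \<open>m\<close>, as \<open>Q\<^sub>k \<equiv> 1 (mod m)\<close>;
  hence it divides \<open>P\<^sub>k\<close>, and by multiplicativity of the norm also \<open>N\<close>. But modulo a prime
  factor of \<open>N\<close> one has \<open>P\<^sub>k \<equiv> T\<^sup>k\<^sup>-\<^sup>1m\<close> with \<open>T = 2 - bm\<close> the trace, and \<open>T\<^sup>2 - 4N = Dm\<^sup>2\<close>
  shows that such a prime divides neither \<open>T\<close> nor \<open>m\<close>. The same congruence applied to any prime
  factor of \<open>N\<close> gives \<open>P\<^sub>k \<noteq> 0\<close>.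
\<close>

fun pow_const_coeff :: "int \<Rightarrow> int \<Rightarrow> int \<Rightarrow> int \<Rightarrow> nat \<Rightarrow> int"
and pow_lin_coeff :: "int \<Rightarrow> int \<Rightarrow> int \<Rightarrow> int \<Rightarrow> nat \<Rightarrow> int" where
  "pow_const_coeff b e m n 0 = 1"
| "pow_lin_coeff b e m n 0 = 0"
| "pow_const_coeff b e m n (Suc k) = n * pow_const_coeff b e m n k - e * m * pow_lin_coeff b e m n k"
| "pow_lin_coeff b e m n (Suc k) = m * pow_const_coeff b e m n k + (n - b * m) * pow_lin_coeff b e m n k"

text \<open>The norm of \<open>x + y\<beta>\<close> for a root \<open>\<beta>\<close> of \<open>t\<^sup>2 + bt + e\<close>.\<close>

definition quad_norm :: "int \<Rightarrow> int \<Rightarrow> int \<Rightarrow> int \<Rightarrow> int" where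
  "quad_norm b e x y = x^2 - b * x * y + e * y^2"

lemma power_linear_eq_coeffs:
  fixes \<beta> :: "'a :: comm_ring_1"
  assumes root: "\<beta>^2 + of_int b * \<beta> + of_int e = 0"
  shows "(of_int m * \<beta> + of_int n) ^ k
           = of_int (pow_lin_coeff b e m n k) * \<beta> + of_int (pow_const_coeff b e m n k)"
proof (induction k)
  case 0
  show ?case by simp
next
  case (Suc k)
  let ?P = "of_int (pow_lin_coeff b e m n k) :: 'a" and ?Q = "of_int (pow_const_coeff b e m n k) :: 'a"
  have sq: "\<beta>^2 = - of_int b * \<beta> - of_int e"
    using root by (simp add: algebra_simps add_eq_0_iff2)
  have "(of_int m * \<beta> + of_int n) ^ Suc k = (?P * \<beta> + ?Q) * (of_int m * \<beta> + of_int n)"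
    using Suc.IH by (simp add: mult.commute)
  also have "\<dots> = of_int m * ?P * \<beta>^2 + (of_int n * ?P + of_int m * ?Q) * \<beta> + of_int n * ?Q"
    by (simp add: algebra_simps power2_eq_square)
  also have "\<dots> = of_int (pow_lin_coeff b e m n (Suc k)) * \<beta> + of_int (pow_const_coeff b e m n (Suc k))"
    unfolding sq by (simp add: algebra_simps)
  finally show ?case .
qed

lemma pow_const_coeff_cong: "m dvd pow_const_coeff b e m n k - n ^ k"
proof (induction k)
  case 0
  show ?case by simp
next
  case (Suc k)
  have eq: "pow_const_coeff b e m n (Suc k) - n ^ Suc k
          = n * (pow_const_coeff b e m n k - n ^ k) - m * (e * pow_lin_coeff b e m n k)"
    by (simp add: algebra_simps)
  show ?case unfolding eq by (rule dvd_diff[OF dvd_mult[OF Suc.IH] dvd_triv_left])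
qed

lemma quad_norm_mult:
  "quad_norm b e (x * x' - e * y * y') (x * y' + y * x' - b * y * y') = quad_norm b e x y * quad_norm b e x' y'"
  unfolding quad_norm_def by (simp add: algebra_simps power2_eq_square)

lemma quad_norm_pow_coeffs:
  "quad_norm b e (pow_const_coeff b e m n k) (pow_lin_coeff b e m n k) = quad_norm b e n m ^ k"
proof (induction k)
  case 0
  show ?case by (simp add: quad_norm_def)
next
  case (Suc k)
  show ?case
    using quad_norm_mult[of b e "pow_const_coeff b e m n k" n "pow_lin_coeff b e m n k" m] Suc.IH
    by (simp add: algebra_simps)
qed

lemma trace_square_minus_quad_norm:
  "(2 * n - b * m)^2 - 4 * quad_norm b e n m = (b^2 - 4 * e) * m^2"
  unfolding quad_norm_def by (simp add: algebra_simps power2_eq_square)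

text \<open>The coefficients satisfy \<open>P\<^sub>k\<^sub>+\<^sub>2 = T P\<^sub>k\<^sub>+\<^sub>1 - N P\<^sub>k\<close>, which collapses modulo a divisor of \<open>N\<close>.\<close>

lemma pow_lin_coeff_mod_quad_norm:
  assumes "p dvd quad_norm b e n m"
  shows "p dvd pow_lin_coeff b e m n (Suc k) - (2 * n - b * m) ^ k * m"
proof (induction k)
  case 0
  show ?case by simp
next
  case (Suc k)
  let ?T = "2 * n - b * m" and ?P = "pow_lin_coeff b e m n"
  have "?P (Suc (Suc k)) = ?T * ?P (Suc k) - quad_norm b e n m * ?P k"
    by (simp add: quad_norm_def algebra_simps power2_eq_square)
  then have "?P (Suc (Suc k)) - ?T ^ Suc k * m
               = ?T * (?P (Suc k) - ?T ^ k * m) - quad_norm b e n m * ?P k"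
    by (simp only: power_Suc) (simp add: algebra_simps del: pow_lin_coeff.simps)
  then show ?case using Suc.IH assms by simp
qed

lemma prime_dvd_quad_norm_not_dvd_lin_coeff:
  assumes p: "prime p" and dvd_norm: "p dvd quad_norm b e 1 m" and disc: "(b^2 - 4 * e) dvd m"
  shows "\<not> p dvd pow_lin_coeff b e m 1 (Suc k)"
proof
  assume dvd_P: "p dvd pow_lin_coeff b e m 1 (Suc k)"
  have not_dvd_m: "\<not> p dvd m"
  proof
    assume "p dvd m"
    then have "p dvd quad_norm b e 1 m - m * (e * m - b)"
      by (intro dvd_diff dvd_norm dvd_mult2)
    moreover have "quad_norm b e 1 m - m * (e * m - b) = 1"
      by (simp add: quad_norm_def algebra_simps power2_eq_square)
    ultimately have "p dvd 1" by simp
    then show False using p not_prime_unit by blast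
  qed
  have not_dvd_trace: "\<not> p dvd 2 - b * m"
  proof
    assume "p dvd 2 - b * m"
    then have "p dvd (2 - b * m)^2 - 4 * quad_norm b e 1 m"
      using dvd_norm by (simp add: power2_eq_square)
    then have "p dvd (b^2 - 4 * e) * m^2"
      using trace_square_minus_quad_norm[of 1 b m e] by simp
    then have "p dvd b^2 - 4 * e \<or> p dvd m"
      using p prime_dvd_mult_iff prime_dvd_power by metis
    then show False using not_dvd_m disc dvd_trans by blast
  qed
  have "\<not> p dvd (2 - b * m) ^ k * m"
    using p not_dvd_m not_dvd_trace prime_dvd_mult_iff prime_dvd_power by metis
  moreover have "p dvd pow_lin_coeff b e m 1 (Suc k) - (2 * 1 - b * m) ^ k * m"
    by (rule pow_lin_coeff_mod_quad_norm[OF dvd_norm])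
  then have "p dvd pow_lin_coeff b e m 1 (Suc k) - (2 - b * m) ^ k * m" by simp
  ultimately show False using dvd_diff_right_iff[OF dvd_P] by blast
qed

lemma coprime_primeI:
  fixes a b :: "'a :: factorial_semiring"
  assumes "a \<noteq> 0" and "\<And>p. prime p \<Longrightarrow> p dvd a \<Longrightarrow> p dvd b \<Longrightarrow> False"
  shows "coprime a b"
proof (rule coprimeI)
  fix c
  assume "c dvd a" "c dvd b"
  show "is_unit c"
  proof (rule ccontr)
    assume "\<not> is_unit c"
    moreover have "c \<noteq> 0" using \<open>c dvd a\<close> assms(1) by auto
    ultimately obtain p where "p dvd c" "prime p" using prime_divisor_exists by blast
    then show False using assms(2) \<open>c dvd a\<close> \<open>c dvd b\<close> dvd_trans by metis
  qed
qed

lemma coprime_pow_coeffs: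
  assumes "a \<noteq> 0" and "pow_lin_coeff b e m 1 (Suc k) \<noteq> 0"
    and "a dvd m" and disc: "(b^2 - 4 * e) dvd m"
  shows "coprime (a * pow_lin_coeff b e m 1 (Suc k)) (pow_const_coeff b e m 1 (Suc k))"
proof (rule coprime_primeI)
  let ?P = "pow_lin_coeff b e m 1 (Suc k)" and ?Q = "pow_const_coeff b e m 1 (Suc k)"
  show "a * ?P \<noteq> 0" using assms(1,2) by simp
  fix p :: int
  assume p: "prime p" and "p dvd a * ?P" and "p dvd ?Q"
  have "\<not> p dvd m"
  proof
    assume "p dvd m"
    moreover have "m dvd ?Q - 1"
      using pow_const_coeff_cong[of m b e 1 "Suc k"] by (simp del: pow_const_coeff.simps)
    ultimately have "p dvd ?Q - 1" by (rule dvd_trans)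
    then have "p dvd 1" using \<open>p dvd ?Q\<close> by (simp add: dvd_diff_right_iff del: pow_const_coeff.simps)
    then show False using p not_prime_unit by blast
  qed
  then have "\<not> p dvd a" using \<open>a dvd m\<close> dvd_trans by blast
  then have "p dvd ?P" using p \<open>p dvd a * ?P\<close> by (simp add: prime_dvd_mult_iff)
  have "p dvd quad_norm b e ?Q ?P"
    unfolding quad_norm_def using \<open>p dvd ?P\<close> \<open>p dvd ?Q\<close> by (simp add: power2_eq_square)
  then have "p dvd quad_norm b e 1 m ^ Suc k" by (simp only: quad_norm_pow_coeffs)
  then have "p dvd quad_norm b e 1 m" by (rule prime_dvd_power[OF p])
  then show False
    using prime_dvd_quad_norm_not_dvd_lin_coeff[OF p _ disc] \<open>p dvd ?P\<close> by blast
qed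

lemma abs_quad_norm_gt_1:
  assumes "e \<noteq> 0" and "\<bar>m\<bar> \<ge> \<bar>b\<bar> + 2"
  shows "\<bar>quad_norm b e 1 m\<bar> > 1"
proof -
  have "\<bar>e\<bar> \<ge> 1" using assms(1) by linarith
  then have "\<bar>e * m\<bar> \<ge> \<bar>m\<bar>" by (simp add: abs_mult mult_le_cancel_right1)
  then have "\<bar>e * m - b\<bar> \<ge> 2" using assms(2) by linarith
  then have "\<bar>m * (e * m - b)\<bar> \<ge> 2 * 2"
    using assms(2) unfolding abs_mult by (intro mult_mono) auto
  moreover have "quad_norm b e 1 m = 1 + m * (e * m - b)"
    by (simp add: quad_norm_def algebra_simps power2_eq_square)
  ultimately show ?thesis by linarith
qed

lemma irreducible_quadratic_coeffs:
  fixes a b c :: int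
  assumes "a \<noteq> 0" and "irreducible (map_poly of_int [:c, b, a:] :: rat poly)"
  shows "c \<noteq> 0" and "b^2 - 4 * a * c \<noteq> 0"
proof -
  let ?f = "map_poly of_int [:c, b, a:] :: rat poly"
  have f: "?f = [:of_int c, of_int b, of_int a:]" by (simp add: map_poly_pCons)
  have "degree ?f > 1" using assms(1) by (simp add: f)
  then have no_root: "poly ?f x \<noteq> 0" for x
    using root_imp_reducible_poly assms(2) by blast
  show "c \<noteq> 0" using no_root[of 0] by (auto simp: f)
  show "b^2 - 4 * a * c \<noteq> 0"
  proof
    assume "b^2 - 4 * a * c = 0"
    then have "of_int b ^ 2 = (4 * of_int a * of_int c :: rat)"
      by (metis of_int_mult of_int_power of_int_numeral eq_iff_diff_eq_0)
    then have "poly ?f (- of_int b / (2 * of_int a)) = 0"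
      using assms(1) by (simp add: f field_simps power2_eq_square)
    then show False using no_root by blast
  qed
qed

lemma scaled_root_monic:
  fixes \<alpha> :: "'a :: comm_ring_1"
  assumes "poly (map_poly of_int [:c, b, a:]) \<alpha> = 0"
  shows "(of_int a * \<alpha>)^2 + of_int b * (of_int a * \<alpha>) + of_int (a * c) = 0"
proof -
  have "(of_int a * \<alpha>)^2 + of_int b * (of_int a * \<alpha>) + of_int (a * c)
          = of_int a * poly (map_poly of_int [:c, b, a:]) \<alpha>"
    by (simp add: map_poly_pCons algebra_simps power2_eq_square)
  then show ?thesis using assms by simp
qed

theorem lemma4p1:
  fixes a b c :: int and \<alpha> :: "'a :: field_char_0" and k :: nat
  assumes "a \<noteq> 0"
    and "irreducible (map_poly of_int [:c, b, a:] :: rat poly)"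
    and "poly (map_poly of_int [:c, b, a:]) \<alpha> = 0"
    and "k \<ge> 1"
  shows "\<exists>m n A B :: int. A \<noteq> 0 \<and> gcd A B = 1 \<and>
           (of_int m * of_int a * \<alpha> + of_int n) ^ k = of_int A * \<alpha> + of_int B"
proof -
  obtain k' where k: "k = Suc k'" using assms(4) by (cases k) auto
  define D where "D = b^2 - 4 * (a * c)"
  define m where "m = a * D * (\<bar>b\<bar> + 2)"
  define P where "P = pow_lin_coeff b (a * c) m 1 k"
  define Q where "Q = pow_const_coeff b (a * c) m 1 k"
  note coeffs = irreducible_quadratic_coeffs[OF assms(1,2)]
  have "a * D \<noteq> 0" using assms(1) coeffs(2) by (simp add: D_def ac_simps)
  then have "\<bar>a * D\<bar> \<ge> 1" by linarith
  then have "\<bar>m\<bar> \<ge> \<bar>b\<bar> + 2"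
    using mult_right_mono[of 1 _ "\<bar>b\<bar> + 2"] by (simp add: m_def abs_mult)
  then have "\<bar>quad_norm b (a * c) 1 m\<bar> > 1" using assms(1) coeffs(1) abs_quad_norm_gt_1 by simp
  then obtain p where p: "prime p" "p dvd quad_norm b (a * c) 1 m"
    using prime_divisor_exists[of "quad_norm b (a * c) 1 m"] by fastforce
  have disc: "(b^2 - 4 * (a * c)) dvd m" by (simp add: m_def D_def)
  have "\<not> p dvd P"
    unfolding P_def k using prime_dvd_quad_norm_not_dvd_lin_coeff[OF p disc] .
  then have "P \<noteq> 0" by auto
  then have "coprime (a * P) Q"
    unfolding P_def Q_def k using coprime_pow_coeffs[OF assms(1) _ _ disc] by (simp add: m_def)
  have "(of_int m * (of_int a * \<alpha>) + of_int 1) ^ k = of_int P * (of_int a * \<alpha>) + of_int Q"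
    unfolding P_def Q_def by (rule power_linear_eq_coeffs[OF scaled_root_monic[OF assms(3)]])
  then have "(of_int m * of_int a * \<alpha> + of_int 1) ^ k = of_int (a * P) * \<alpha> + (of_int Q :: 'a)"
    by (simp add: ac_simps)
  moreover have "a * P \<noteq> 0" using assms(1) \<open>P \<noteq> 0\<close> by simp
  moreover have "gcd (a * P) Q = 1" using \<open>coprime (a * P) Q\<close> by (simp add: coprime_iff_gcd_eq_1)
  ultimately show ?thesis by (intro exI conjI)
qed

end
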